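(* Let $G$ be a connected simple graph and let $e=uv\in E(G)$ be an edge that is not a bridge of $G$. Then $$\chi_{dom}(G)-1\leq \chi_{dom}(G-e)\leq \chi_{dom}(G)+2.$$
   Context: All graphs are finite and simple. A dominated coloring (dom-coloring) of a graph $H$ is a proper vertex coloring of $H$ such that for every color class $C$ there is a vertex $x\in V(H)$ adjacent to every vertex of $C$ (i.e. $C\subseteq N_H(x)$); we say $C$ is dominated by $x$. The dominated chromatic number $\chi_{dom}(H)$ is the minimum number of colors in a dominated coloring of $H$ (considered for graphs in which such a coloring exists). $G-e$ denotes the graph obtained from $G$ by deleting the edge $e$ (keeping all vertices). *)

theory Defs
  imports Main
begin

definition simple_graph :: "'a set \<Rightarrow> 'a set set \<Rightarrow> bool" where
  "simple_graph V E \<longleftrightarrow> finite V \<and> (\<forall>e\<in>E. \<exists>x y. e = {x, y} \<and> x \<noteq> y \<and> x \<in> V \<and> y \<in> V)"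

definition adj :: "'a set set \<Rightarrow> 'a \<Rightarrow> 'a \<Rightarrow> bool" where
  "adj E x y \<longleftrightarrow> {x, y} \<in> E"

definition reachable :: "'a set set \<Rightarrow> 'a \<Rightarrow> 'a \<Rightarrow> bool" where
  "reachable E x y \<longleftrightarrow> (adj E)\<^sup>*\<^sup>* x y"

definition connected_graph :: "'a set \<Rightarrow> 'a set set \<Rightarrow> bool" where
  "connected_graph V E \<longleftrightarrow> V \<noteq> {} \<and> (\<forall>x\<in>V. \<forall>y\<in>V. reachable E x y)"

definition is_bridge :: "'a set \<Rightarrow> 'a set set \<Rightarrow> 'a set \<Rightarrow> bool" where
  "is_bridge V E e \<longleftrightarrow> e \<in> E \<and>
     (\<exists>x\<in>V. \<exists>y\<in>V. reachable E x y \<and> \<not> reachable (E - {e}) x y)"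

definition dom_coloring :: "'a set \<Rightarrow> 'a set set \<Rightarrow> ('a \<Rightarrow> nat) \<Rightarrow> bool" where
  "dom_coloring V E c \<longleftrightarrow>
     (\<forall>x\<in>V. \<forall>y\<in>V. adj E x y \<longrightarrow> c x \<noteq> c y) \<and>
     (\<forall>i\<in>c ` V. \<exists>x\<in>V. \<forall>y\<in>V. c y = i \<longrightarrow> adj E x y)"

definition chi_dom :: "'a set \<Rightarrow> 'a set set \<Rightarrow> nat" where
  "chi_dom V E = (LEAST k. \<exists>c. dom_coloring V E c \<and> card (c ` V) = k)"

end

theory Submission
  imports Defs
begin

text \<open>Both bounds come from recolouring. Given a dominated colouring of G, giving u and v two new
  colours yields a dominated colouring of G - e: the new classes {u}, {v} are dominated because
  G - e, being connected, has no isolated vertex, and every old class loses at most u, v, so its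
  dominator keeps its edges to it. Conversely, giving u alone a new colour turns a dominated
  colouring of G - e into one of G, the class {u} being dominated by v.\<close>

lemma adj_sym: "adj E x y \<Longrightarrow> adj E y x"
  unfolding adj_def by (simp add: insert_commute)

lemma adj_irrefl: "simple_graph V E \<Longrightarrow> adj E x y \<Longrightarrow> x \<noteq> y"
  unfolding simple_graph_def adj_def by (metis doubleton_eq_iff insert_absorb2)

lemma adj_in_vertices: "simple_graph V E \<Longrightarrow> adj E x y \<Longrightarrow> x \<in> V \<and> y \<in> V"
  unfolding simple_graph_def adj_def by (metis doubleton_eq_iff)

lemma edge_endpoints:
  "simple_graph V E \<Longrightarrow> {u, v} \<in> E \<Longrightarrow> u \<noteq> v \<and> u \<in> V \<and> v \<in> V"
  using adj_irrefl[of V E u v] adj_in_vertices[of V E u v] unfolding adj_def by blast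

lemma simple_graph_mono: "simple_graph V E \<Longrightarrow> E' \<subseteq> E \<Longrightarrow> simple_graph V E'"
  unfolding simple_graph_def by blast

lemma reachable_imp_neighbour:
  assumes "simple_graph V E" and "reachable E y z" and "y \<noteq> z"
  shows "\<exists>x\<in>V. adj E x y"
proof -
  have "(adj E)\<^sup>*\<^sup>* y z" using assms(2) unfolding reachable_def .
  then obtain w where "adj E y w"
    using assms(3) by (metis converse_rtranclpE)
  then have "adj E w y" by (rule adj_sym)
  moreover have "w \<in> V" using adj_in_vertices[OF assms(1) \<open>adj E w y\<close>] by blast
  ultimately show ?thesis by blast
qed

lemma chi_dom_le: "dom_coloring V E c \<Longrightarrow> chi_dom V E \<le> card (c ` V)"
  unfolding chi_dom_def by (rule Least_le) blast

lemma chi_dom_attained: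
  "dom_coloring V E c \<Longrightarrow> \<exists>c. dom_coloring V E c \<and> card (c ` V) = chi_dom V E"
  unfolding chi_dom_def by (rule LeastI_ex) blast

lemma chi_dom_le_by_transfer:
  assumes "dom_coloring V E c"
    and "\<And>c. dom_coloring V E c \<Longrightarrow>
           \<exists>c'. dom_coloring V E' c' \<and> card (c' ` V) \<le> card (c ` V) + k"
  shows "chi_dom V E' \<le> chi_dom V E + k"
proof -
  obtain c0 where "dom_coloring V E c0" "card (c0 ` V) = chi_dom V E"
    using chi_dom_attained[OF assms(1)] by blast
  with assms(2) obtain c' where "dom_coloring V E' c'" "card (c' ` V) \<le> chi_dom V E + k"
    by metis
  then show ?thesis using chi_dom_le[of V E' c'] by linarith
qed

lemma ex_dom_coloring:
  assumes "simple_graph V E" and "\<And>y. y \<in> V \<Longrightarrow> \<exists>x\<in>V. adj E x y"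
  shows "\<exists>c. dom_coloring V E c"
proof -
  have "finite V" using assms(1) unfolding simple_graph_def by blast
  then obtain c :: "'a \<Rightarrow> nat" where inj: "inj_on c V"
    using finite_imp_inj_to_nat_seg by blast
  have "dom_coloring V E c"
    unfolding dom_coloring_def
  proof (intro conjI ballI impI)
    fix x y assume "x \<in> V" "y \<in> V" "adj E x y"
    then show "c x \<noteq> c y" using adj_irrefl[OF assms(1)] inj by (metis inj_onD)
  next
    fix i assume "i \<in> c ` V"
    then obtain z where z: "z \<in> V" "i = c z" by blast
    moreover obtain x where "x \<in> V" "adj E x z" using assms(2) z(1) by blast
    ultimately show "\<exists>x\<in>V. \<forall>y\<in>V. c y = i \<longrightarrow> adj E x y"
      using inj by (metis inj_onD)
  qed
  then show ?thesis by blast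
qed

lemma fresh_recolouring_exists:
  fixes c :: "'a \<Rightarrow> nat"
  assumes "finite A" and "finite S"
  shows "\<exists>c'. (\<forall>x. x \<notin> S \<longrightarrow> c' x = c x) \<and> inj_on c' S \<and> c' ` S \<inter> A = {}"
proof -
  obtain f :: "'a \<Rightarrow> nat" where f: "inj_on f S"
    using finite_imp_inj_to_nat_seg[OF assms(2)] by blast
  define c' where "c' x = (if x \<in> S then Suc (Max A) + f x else c x)" for x
  have "inj_on c' S" using f unfolding c'_def inj_on_def by simp
  moreover have "c' ` S \<inter> A = {}"
    using Max_ge[OF assms(1)] unfolding c'_def by fastforce
  moreover have "\<forall>x. x \<notin> S \<longrightarrow> c' x = c x" unfolding c'_def by simp
  ultimately show ?thesis by blast
qed

lemma card_image_recolour_le: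
  assumes "finite V" and "finite S" and "\<And>x. x \<notin> S \<Longrightarrow> c' x = c x"
  shows "card (c' ` V) \<le> card (c ` V) + card S"
proof -
  have "c' ` V \<subseteq> c ` V \<union> c' ` S" using assms(3) by auto
  then have "card (c' ` V) \<le> card (c ` V \<union> c' ` S)"
    using assms(1,2) by (intro card_mono) auto
  also have "\<dots> \<le> card (c ` V) + card (c' ` S)" by (rule card_Un_le)
  also have "\<dots> \<le> card (c ` V) + card S" using card_image_le[OF assms(2)] by simp
  finally show ?thesis .
qed

text \<open>The edge hypotheses are asymmetric because an old colour class avoids S after
  recolouring, while its dominator may lie in S.\<close>
lemma dom_coloring_recolour:
  assumes sg: "simple_graph V E'"
    and dc: "dom_coloring V E c"
    and E'_E: "\<And>x y. adj E' x y \<Longrightarrow> x \<notin> S \<Longrightarrow> y \<notin> S \<Longrightarrow> adj E x y"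
    and E_E': "\<And>x y. adj E x y \<Longrightarrow> y \<notin> S \<Longrightarrow> adj E' x y"
    and nb: "\<And>s. s \<in> S \<Longrightarrow> \<exists>x\<in>V. adj E' x s"
    and agree: "\<And>x. x \<notin> S \<Longrightarrow> c' x = c x"
    and inj: "inj_on c' S"
    and fresh: "c' ` S \<inter> c ` V = {}"
  shows "dom_coloring V E' c'"
  unfolding dom_coloring_def
proof (intro conjI ballI impI)
  fix x y assume xy: "x \<in> V" "y \<in> V" "adj E' x y"
  have "x \<noteq> y" using adj_irrefl[OF sg xy(3)] .
  moreover have "c x \<noteq> c y" if "x \<notin> S" "y \<notin> S"
    using dc xy E'_E[OF xy(3) that] unfolding dom_coloring_def by blast
  ultimately show "c' x \<noteq> c' y"
    using xy(1,2) agree inj fresh by (cases "x \<in> S"; cases "y \<in> S") (auto dest: inj_onD)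
next
  fix i assume "i \<in> c' ` V"
  then obtain z where z: "z \<in> V" "i = c' z" by blast
  show "\<exists>x\<in>V. \<forall>y\<in>V. c' y = i \<longrightarrow> adj E' x y"
  proof (cases "z \<in> S")
    case True
    have "y = z" if "y \<in> V" "c' y = i" for y
      using that z True agree inj fresh by (cases "y \<in> S") (auto dest: inj_onD)
    then show ?thesis using nb[OF True] by blast
  next
    case False
    then obtain x where x: "x \<in> V" "\<forall>y\<in>V. c y = i \<longrightarrow> adj E x y"
      using dc z agree unfolding dom_coloring_def by fastforce
    have "y \<notin> S" if "y \<in> V" "c' y = i" for y
      using that z False agree fresh by auto
    then show ?thesis using x agree E_E' by (metis (full_types))
  qed
qed

lemma dom_coloring_delete_edge:
  assumes "simple_graph V E" and "dom_coloring V E c" and "u \<in> V" and "v \<in> V"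
    and "\<And>y. y \<in> V \<Longrightarrow> \<exists>x\<in>V. adj (E - {{u, v}}) x y"
  shows "\<exists>c'. dom_coloring V (E - {{u, v}}) c' \<and> card (c' ` V) \<le> card (c ` V) + 2"
proof -
  have fin: "finite V" using assms(1) unfolding simple_graph_def by blast
  have sg: "simple_graph V (E - {{u, v}})" using simple_graph_mono[OF assms(1)] by blast
  obtain c' where c': "\<forall>x. x \<notin> {u, v} \<longrightarrow> c' x = c x" "inj_on c' {u, v}"
      "c' ` {u, v} \<inter> c ` V = {}"
    using fresh_recolouring_exists[OF finite_imageI[OF fin], of "{u, v}" c] by blast
  have nb: "\<exists>x\<in>V. adj (E - {{u, v}}) x s" if "s \<in> {u, v}" for s
    using assms(3-5) that by blast
  have "dom_coloring V (E - {{u, v}}) c'"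
  proof (rule dom_coloring_recolour[OF sg assms(2) _ _ nb _ c'(2,3)])
    show "adj E x y" if "adj (E - {{u, v}}) x y" for x y
      using that unfolding adj_def by blast
    show "adj (E - {{u, v}}) x y" if "adj E x y" "y \<notin> {u, v}" for x y
      using that unfolding adj_def by (auto simp: doubleton_eq_iff)
    show "c' x = c x" if "x \<notin> {u, v}" for x
      using c'(1) that by blast
  qed
  moreover have "card (c' ` V) \<le> card (c ` V) + card {u, v}"
    by (rule card_image_recolour_le[OF fin]) (use c'(1) in auto)
  moreover have "card {u, v} \<le> 2" by (simp add: card_insert_if)
  ultimately show ?thesis by (meson add_left_mono order_trans)
qed

lemma dom_coloring_insert_edge:
  assumes "simple_graph V E" and "dom_coloring V E c" and "u \<in> V" and "v \<in> V" and "u \<noteq> v"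
  shows "\<exists>c'. dom_coloring V (insert {u, v} E) c' \<and> card (c' ` V) \<le> card (c ` V) + 1"
proof -
  have fin: "finite V" using assms(1) unfolding simple_graph_def by blast
  have sg: "simple_graph V (insert {u, v} E)"
    using assms(1,3-5) unfolding simple_graph_def by blast
  obtain c' where c': "\<forall>x. x \<notin> {u} \<longrightarrow> c' x = c x" "inj_on c' {u}" "c' ` {u} \<inter> c ` V = {}"
    using fresh_recolouring_exists[OF finite_imageI[OF fin], of "{u}" c] by blast
  have "adj (insert {u, v} E) v u" unfolding adj_def by (simp add: insert_commute)
  then have nb: "\<exists>x\<in>V. adj (insert {u, v} E) x s" if "s \<in> {u}" for s
    using assms(4) that by blast
  have "dom_coloring V (insert {u, v} E) c'"
  proof (rule dom_coloring_recolour[OF sg assms(2) _ _ nb _ c'(2,3)])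
    show "adj E x y" if "adj (insert {u, v} E) x y" "x \<notin> {u}" "y \<notin> {u}" for x y
      using that unfolding adj_def by (auto simp: doubleton_eq_iff)
    show "adj (insert {u, v} E) x y" if "adj E x y" for x y
      using that unfolding adj_def by blast
    show "c' x = c x" if "x \<notin> {u}" for x
      using c'(1) that by blast
  qed
  moreover have "card (c' ` V) \<le> card (c ` V) + card {u}"
    by (rule card_image_recolour_le[OF fin]) (use c'(1) in auto)
  ultimately show ?thesis by auto
qed

lemma delete_non_bridge_no_isolated:
  assumes sg: "simple_graph V E" and "connected_graph V E"
    and uv: "{u, v} \<in> E" and "\<not> is_bridge V E {u, v}" and y: "y \<in> V"
  shows "\<exists>x\<in>V. adj (E - {{u, v}}) x y"
proof -
  have "u \<noteq> v" "u \<in> V" "v \<in> V" using edge_endpoints[OF sg uv] by auto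
  then obtain z where z: "z \<in> V" "z \<noteq> y" by blast
  have "reachable (E - {{u, v}}) y z"
    using assms(2-4) y z(1) unfolding connected_graph_def is_bridge_def by blast
  then show ?thesis
    using reachable_imp_neighbour simple_graph_mono[OF sg] z(2) by (metis Diff_subset)
qed

theorem theorem2p1:
  fixes V :: "'a set" and E :: "'a set set" and u v :: 'a
  assumes "simple_graph V E"
    and "connected_graph V E"
    and "{u, v} \<in> E"
    and "\<not> is_bridge V E {u, v}"
  shows "chi_dom V E - 1 \<le> chi_dom V (E - {{u, v}})
       \<and> chi_dom V (E - {{u, v}}) \<le> chi_dom V E + 2"
proof -
  note sg = assms(1)
  have uv: "u \<noteq> v" "u \<in> V" "v \<in> V" using edge_endpoints[OF sg assms(3)] by auto
  have sg': "simple_graph V (E - {{u, v}})" using simple_graph_mono[OF sg] by blast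
  have no_isolated: "\<And>y. y \<in> V \<Longrightarrow> \<exists>x\<in>V. adj (E - {{u, v}}) x y"
    using delete_non_bridge_no_isolated[OF assms] .
  obtain c' where c': "dom_coloring V (E - {{u, v}}) c'"
    using ex_dom_coloring[OF sg' no_isolated] by blast
  have E_eq: "insert {u, v} (E - {{u, v}}) = E" using assms(3) by blast
  have "chi_dom V E \<le> chi_dom V (E - {{u, v}}) + 1"
    using chi_dom_le_by_transfer[OF c'] dom_coloring_insert_edge[OF sg' _ uv(2,3,1)]
    unfolding E_eq by blast
  moreover obtain c where "dom_coloring V E c"
    using dom_coloring_insert_edge[OF sg' c' uv(2,3,1)] unfolding E_eq by blast
  then have "chi_dom V (E - {{u, v}}) \<le> chi_dom V E + 2"
    using chi_dom_le_by_transfer dom_coloring_delete_edge[OF sg _ uv(2,3) no_isolated]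
    by blast
  ultimately show ?thesis by linarith
qed

end
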